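(* Let $L>0$, $N\in\mathbb{N}_+$, $h=L/N$, $\epsilon>0$, $\theta_0>0$, $\tau>0$, $\alpha\in(0,1)$, $\rho_u>0$, $\rho_w>0$, and let $u^n\in\mathcal{C}_{per}$ with $-1<u^n<1$ pointwise. Let $u^{n+1}\in\mathcal{C}_{per}$ (with $-1<u^{n+1}<1$ pointwise) be the solution of the first-order convex splitting scheme, i.e. together with some $w^{n+1}\in\mathcal{C}_{per}$, $$u^{n+1}-u^n=\tau\Delta_hw^{n+1},\qquad w^{n+1}=\log(1+u^{n+1})-\log(1-u^{n+1})-\theta_0u^n-\epsilon^2\Delta_hu^{n+1}.$$ Let $\{u_2^{(k)}\}$ be the sequence generated by Algorithm 1 (described in the context). Then $\lim_{k\to\infty}\|u_2^{(k)}-u^{n+1}\|_2=0$.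
   Context: $\mathcal{C}_{per}$ is the space of real grid functions $\nu=(\nu_{i,j,k})_{i,j,k\in\mathbb{Z}}$ that are $N$-periodic in each index (values at cell centres of a uniform grid of mesh size $h$ on $(0,L)^3$). Inner product $\langle\nu,\xi\rangle=h^2\sum_{i,j,k=1}^N\nu_{i,j,k}\xi_{i,j,k}$, $\|\nu\|_2=\langle\nu,\nu\rangle^{1/2}$. Discrete Laplacian $(\Delta_h\nu)_{i,j,k}=h^{-2}(\nu_{i+1,j,k}+\nu_{i-1,j,k}+\nu_{i,j+1,k}+\nu_{i,j-1,k}+\nu_{i,j,k+1}+\nu_{i,j,k-1}-6\nu_{i,j,k})$. Operations and inequalities are pointwise. Such a solution $(u^{n+1},w^{n+1})$ of the scheme exists and is unique for $-1<u^n<1$. Algorithm 1: set $u_2^{(0)}=u^n$, $w_2^{(0)}=0$, $u_3^{(0)}=0$, $w_3^{(0)}=0$. For $k=0,1,2,\dots$: (i) find $u_1^{(k+1)},w_1^{(k+1)}\in\mathcal{C}_{per}$ solving $-\epsilon^2\Delta_hu_1^{(k+1)}-\alpha w_1^{(k+1)}+u_3^{(k)}+\rho_u(u_1^{(k+1)}-u_2^{(k)})=0$ and $\alpha(-u_1^{(k+1)}+u^n)+\tau\Delta_hw_1^{(k+1)}-w_3^{(k)}-\rho_w(w_1^{(k+1)}-w_2^{(k)})=0$; (ii) find $u_2^{(k+1)},w_2^{(k+1)}\in\mathcal{C}_{per}$ with $-1<u_2^{(k+1)}<1$ solving $\log(1+u_2^{(k+1)})-\log(1-u_2^{(k+1)})-\theta_0u^n-(1-\alpha)w_2^{(k+1)}-u_3^{(k)}-\rho_u(u_1^{(k+1)}-u_2^{(k+1)})=0$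 and $(1-\alpha)(-u_2^{(k+1)}+u^n)+w_3^{(k)}+\rho_w(w_1^{(k+1)}-w_2^{(k+1)})=0$; (iii) set $u_3^{(k+1)}=u_3^{(k)}+\rho_u(u_1^{(k+1)}-u_2^{(k+1)})$, $w_3^{(k+1)}=w_3^{(k)}+\rho_w(w_1^{(k+1)}-w_2^{(k+1)})$. *)

theory Defs
  imports Complex_Main
begin

type_synonym grid = "int \<Rightarrow> int \<Rightarrow> int \<Rightarrow> real"

definition per :: "nat \<Rightarrow> grid \<Rightarrow> bool" where
  "per N v \<longleftrightarrow> (\<forall>i j k. v (i + int N) j k = v i j k \<and> v i (j + int N) k = v i j k
                         \<and> v i j (k + int N) = v i j k)"

definition lap :: "real \<Rightarrow> grid \<Rightarrow> grid" where
  "lap h v = (\<lambda>i j k. (v (i+1) j k + v (i-1) j k + v i (j+1) k + v i (j-1) k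
                       + v i j (k+1) + v i j (k-1) - 6 * v i j k) / h\<^sup>2)"

text \<open>Discrete inner product and norm, as in the paper (weight h^2).\<close>
definition ginner :: "real \<Rightarrow> nat \<Rightarrow> grid \<Rightarrow> grid \<Rightarrow> real" where
  "ginner h N v x = h\<^sup>2 * (\<Sum>i\<in>{1..int N}. \<Sum>j\<in>{1..int N}. \<Sum>k\<in>{1..int N}. v i j k * x i j k)"

definition gnorm2 :: "real \<Rightarrow> nat \<Rightarrow> grid \<Rightarrow> real" where
  "gnorm2 h N v = sqrt (ginner h N v v)"

end

theory Submission
  imports Defs
begin

(* Algorithm 1 is an ADMM iteration, and the scheme solution (u^{n+1}, w^{n+1}), together with
   suitable multipliers, is a fixed point of it.  Measured from this fixed point, the usual ADMM
   energy (squared multiplier errors over rho plus rho times squared errors of u2, w2) drops in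
   every sweep by at least 4 ||u2 - u^{n+1}||^2: the step-(i) terms have a sign by summation by
   parts (-Delta_h is positive semidefinite on periodic grid functions), and the step-(ii) term
   by strong monotonicity of ln(1+x) - ln(1-x), whose derivative is at least 2.  A nonnegative
   sequence with such decrements forces ||u2 - u^{n+1}|| -> 0. *)

lemma sum_periodic_shift_one:
  fixes f :: "int \<Rightarrow> 'a::cancel_comm_monoid_add"
  assumes "\<And>i. f (i + int N) = f i"
  shows "(\<Sum>i\<in>{1..int N}. f (i + 1)) = (\<Sum>i\<in>{1..int N}. f i)"
proof -
  have "(\<Sum>i\<in>{1..int N}. f (i + 1)) = (\<Sum>i\<in>{2..int N + 1}. f i)"
    by (rule sum.reindex_bij_witness[where i="\<lambda>i. i - 1" and j="\<lambda>i. i + 1"]) auto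
  then have "f 1 + (\<Sum>i\<in>{1..int N}. f (i + 1)) = (\<Sum>i\<in>insert 1 {2..int N + 1}. f i)"
    by simp
  also have "insert 1 {2..int N + 1} = insert (int N + 1) {1..int N}"
    by auto
  also have "(\<Sum>i\<in>insert (int N + 1) {1..int N}. f i) = f 1 + (\<Sum>i\<in>{1..int N}. f i)"
    using assms[of 1] by (simp add: add.commute)
  finally show ?thesis by simp
qed

lemma sum_periodic_shift:
  fixes f :: "int \<Rightarrow> 'a::cancel_comm_monoid_add"
  assumes "\<And>i. f (i + int N) = f i"
  shows "(\<Sum>i\<in>{1..int N}. f (i + a)) = (\<Sum>i\<in>{1..int N}. f i)"
proof (induction a rule: int_induct[where k = 0])
  case (step1 a)
  have "(\<Sum>i\<in>{1..int N}. f (i + 1 + a)) = (\<Sum>i\<in>{1..int N}. f (i + a))"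
    by (rule sum_periodic_shift_one) (metis assms add.assoc add.commute)
  with step1 show ?case by (simp add: ac_simps)
next
  case (step2 a)
  have "(\<Sum>i\<in>{1..int N}. f (i + 1 + (a - 1))) = (\<Sum>i\<in>{1..int N}. f (i + (a - 1)))"
    by (rule sum_periodic_shift_one) (metis assms add.assoc add.commute)
  with step2 show ?case by simp
qed simp

definition box_sum :: "nat \<Rightarrow> grid \<Rightarrow> real" where
  "box_sum N g = (\<Sum>i\<in>{1..int N}. \<Sum>j\<in>{1..int N}. \<Sum>k\<in>{1..int N}. g i j k)"

lemma box_sum_add: "box_sum N (\<lambda>i j k. f i j k + g i j k) = box_sum N f + box_sum N g"
  unfolding box_sum_def by (simp add: sum.distrib)

lemma box_sum_diff: "box_sum N (\<lambda>i j k. f i j k - g i j k) = box_sum N f - box_sum N g"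
  unfolding box_sum_def by (simp add: sum_subtractf)

lemma box_sum_cmult: "box_sum N (\<lambda>i j k. c * f i j k) = c * box_sum N f"
  unfolding box_sum_def by (simp add: sum_distrib_left)

lemma box_sum_divide: "box_sum N (\<lambda>i j k. f i j k / c) = box_sum N f / c"
  unfolding box_sum_def by (simp add: sum_divide_distrib)

lemma box_sum_mono: "(\<And>i j k. f i j k \<le> g i j k) \<Longrightarrow> box_sum N f \<le> box_sum N g"
  unfolding box_sum_def by (intro sum_mono) auto

lemma box_sum_nonneg: "(\<And>i j k. 0 \<le> f i j k) \<Longrightarrow> 0 \<le> box_sum N f"
  unfolding box_sum_def by (intro sum_nonneg) auto

lemma box_sum_translate:
  assumes "per N g"
  shows "box_sum N (\<lambda>i j k. g (i + a) (j + b) (k + c)) = box_sum N g"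
proof -
  have "box_sum N (\<lambda>i j k. g (i + a) (j + b) (k + c))
      = (\<Sum>i\<in>{1..int N}. \<Sum>j\<in>{1..int N}. \<Sum>k\<in>{1..int N}. g (i + a) (j + b) k)"
    unfolding box_sum_def using assms
    by (intro sum.cong refl sum_periodic_shift) (simp add: per_def)
  also have "\<dots> = (\<Sum>i\<in>{1..int N}. \<Sum>j\<in>{1..int N}. \<Sum>k\<in>{1..int N}. g (i + a) j k)"
    using assms by (intro sum.cong refl sum_periodic_shift[where f = "\<lambda>j. \<Sum>k\<in>{1..int N}. g _ j k"])
      (simp add: per_def)
  also have "\<dots> = box_sum N g"
    unfolding box_sum_def using assms
    by (intro sum_periodic_shift[where f = "\<lambda>i. \<Sum>j\<in>{1..int N}. \<Sum>k\<in>{1..int N}. g i j k"])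
      (simp add: per_def)
  finally show ?thesis .
qed

lemma per_translate:
  assumes "per N v"
  shows "per N (\<lambda>i j k. v (i + a) (j + b) (k + c))"
  unfolding per_def
proof (intro allI conjI)
  fix i j k
  note periodic = assms[unfolded per_def, rule_format]
  show "v (i + int N + a) (j + b) (k + c) = v (i + a) (j + b) (k + c)"
    using periodic[of "i + a"] by (simp add: ac_simps)
  show "v (i + a) (j + int N + b) (k + c) = v (i + a) (j + b) (k + c)"
    using periodic[of _ "j + b"] by (simp add: ac_simps)
  show "v (i + a) (j + b) (k + int N + c) = v (i + a) (j + b) (k + c)"
    using periodic[of _ _ "k + c"] by (simp add: ac_simps)
qed

lemma per_mult: "per N f \<Longrightarrow> per N g \<Longrightarrow> per N (\<lambda>i j k. f i j k * g i j k)"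
  unfolding per_def by simp

lemma per_diff: "per N f \<Longrightarrow> per N g \<Longrightarrow> per N (\<lambda>i j k. f i j k - g i j k)"
  unfolding per_def by simp

lemma lap_diff: "lap h (\<lambda>i j k. f i j k - g i j k) i j k = lap h f i j k - lap h g i j k"
  unfolding lap_def diff_divide_distrib[symmetric]
  by (rule arg_cong[where f = "\<lambda>x. x / h\<^sup>2"]) (simp add: algebra_simps)

lemma box_sum_second_difference:
  assumes "per N v"
  shows "box_sum N (\<lambda>i j k. (v (i + a) (j + b) (k + c) + v (i - a) (j - b) (k - c) - 2 * v i j k) * v i j k)
       = - box_sum N (\<lambda>i j k. (v (i + a) (j + b) (k + c) - v i j k)\<^sup>2)"
proof -
  have squares: "box_sum N (\<lambda>i j k. (v (i + a) (j + b) (k + c))\<^sup>2) = box_sum N (\<lambda>i j k. (v i j k)\<^sup>2)"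
    using assms by (intro box_sum_translate[where g = "\<lambda>i j k. (v i j k)\<^sup>2"]) (simp add: per_def)
  have "box_sum N (\<lambda>i j k. v (i + a - a) (j + b - b) (k + c - c) * v (i + a) (j + b) (k + c))
      = box_sum N (\<lambda>i j k. v (i - a) (j - b) (k - c) * v i j k)"
    using assms by (intro box_sum_translate[where g = "\<lambda>i j k. v (i - a) (j - b) (k - c) * v i j k"])
      (intro per_mult per_translate[where a = "- a" and b = "- b" and c = "- c", simplified])
  then have products: "box_sum N (\<lambda>i j k. v (i - a) (j - b) (k - c) * v i j k)
      = box_sum N (\<lambda>i j k. v i j k * v (i + a) (j + b) (k + c))"
    by simp
  have "(\<lambda>i j k. (v (i + a) (j + b) (k + c) + v (i - a) (j - b) (k - c) - 2 * v i j k) * v i j k)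
      = (\<lambda>i j k. ((v (i + a) (j + b) (k + c))\<^sup>2 - (v i j k)\<^sup>2)
          + (v (i - a) (j - b) (k - c) * v i j k - v i j k * v (i + a) (j + b) (k + c))
          - (v (i + a) (j + b) (k + c) - v i j k)\<^sup>2)"
    by (intro ext) (simp add: algebra_simps power2_eq_square)
  then show ?thesis
    by (simp add: box_sum_add box_sum_diff squares products)
qed

lemma box_sum_lap_mult_self:
  assumes "per N v"
  shows "box_sum N (\<lambda>i j k. lap h v i j k * v i j k)
       = - box_sum N (\<lambda>i j k. (v (i + 1) j k - v i j k)\<^sup>2 + (v i (j + 1) k - v i j k)\<^sup>2
                              + (v i j (k + 1) - v i j k)\<^sup>2) / h\<^sup>2"
proof -
  have "(\<lambda>i j k. lap h v i j k * v i j k)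
      = (\<lambda>i j k. ((v (i + 1) j k + v (i - 1) j k - 2 * v i j k) * v i j k
                 + (v i (j + 1) k + v i (j - 1) k - 2 * v i j k) * v i j k
                 + (v i j (k + 1) + v i j (k - 1) - 2 * v i j k) * v i j k) / h\<^sup>2)"
    unfolding lap_def by (intro ext) (simp add: algebra_simps add_divide_distrib)
  then show ?thesis
    using box_sum_second_difference[OF assms, of 1 0 0] box_sum_second_difference[OF assms, of 0 1 0]
      box_sum_second_difference[OF assms, of 0 0 1]
    by (simp add: box_sum_divide box_sum_add)
qed

lemma box_sum_lap_mult_self_nonpos:
  assumes "per N v"
  shows "box_sum N (\<lambda>i j k. lap h v i j k * v i j k) \<le> 0"
  unfolding box_sum_lap_mult_self[OF assms]
  by (simp add: box_sum_nonneg divide_nonneg_nonneg)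

(* The derivative of the convex part (1+x) ln(1+x) + (1-x) ln(1-x) of the potential. *)
definition log_ratio :: "real \<Rightarrow> real" where
  "log_ratio x = ln (1 + x) - ln (1 - x)"

lemma log_ratio_minus_double_mono:
  assumes "-1 < y" "y \<le> x" "x < 1"
  shows "log_ratio y - 2 * y \<le> log_ratio x - 2 * x"
proof (rule DERIV_nonneg_imp_nondecreasing[OF \<open>y \<le> x\<close>])
  fix t assume "y \<le> t" "t \<le> x"
  then have t: "0 < 1 + t" "0 < 1 - t" using assms by auto
  have "((\<lambda>t. log_ratio t - 2 * t) has_real_derivative 1 / (1 + t) + 1 / (1 - t) - 2) (at t)"
    unfolding log_ratio_def using t by (auto intro!: derivative_eq_intros)
  moreover have "1 / (1 + t) + 1 / (1 - t) - 2 = 2 * t\<^sup>2 / ((1 + t) * (1 - t))"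
    using t by (simp add: divide_simps) algebra
  moreover have "0 \<le> 2 * t\<^sup>2 / ((1 + t) * (1 - t))"
    using t by simp
  ultimately show "\<exists>d. ((\<lambda>t. log_ratio t - 2 * t) has_real_derivative d) (at t) \<and> 0 \<le> d"
    by auto
qed

lemma log_ratio_strongly_monotone:
  assumes "-1 < x" "x < 1" "-1 < y" "y < 1"
  shows "2 * (x - y)\<^sup>2 \<le> (log_ratio x - log_ratio y) * (x - y)"
proof (cases "y \<le> x")
  case True
  then have "2 * (x - y) \<le> log_ratio x - log_ratio y"
    using log_ratio_minus_double_mono[of y x] assms by simp
  then have "2 * (x - y) * (x - y) \<le> (log_ratio x - log_ratio y) * (x - y)"
    using True by (intro mult_right_mono) auto
  then show ?thesis by (simp add: power2_eq_square algebra_simps)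
next
  case False
  then have "2 * (y - x) \<le> log_ratio y - log_ratio x"
    using log_ratio_minus_double_mono[of x y] assms by simp
  then have "2 * (y - x) * (y - x) \<le> (log_ratio y - log_ratio x) * (y - x)"
    using False by (intro mult_right_mono) auto
  then show ?thesis by (simp add: power2_eq_square algebra_simps)
qed

(* Algorithm 1 minus a fixed point of it, in the errors du, dw of all variables;
   D1 = -eps^2 Delta_h du1, D2 = tau Delta_h dw1 and G is the increment of log_ratio. *)
lemma admm_error_identity:
  fixes rho_u rho_w alpha du1 dw1 du2 dw2 du2o dw2o du3 dw3 du3o dw3o D1 D2 G :: real
  assumes "rho_u \<noteq> 0" "rho_w \<noteq> 0"
    and step_i_u: "D1 - alpha * dw1 + du3o + rho_u * (du1 - du2o) = 0"
    and step_i_w: "- alpha * du1 + D2 - dw3o - rho_w * (dw1 - dw2o) = 0"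
    and step_ii_u: "G - (1 - alpha) * dw2 - du3o - rho_u * (du1 - du2) = 0"
    and step_ii_w: "- (1 - alpha) * du2 + dw3o + rho_w * (dw1 - dw2) = 0"
    and step_iii_u: "du3 = du3o + rho_u * (du1 - du2)"
    and step_iii_w: "dw3 = dw3o + rho_w * (dw1 - dw2)"
  shows "du3o\<^sup>2 / rho_u + dw3o\<^sup>2 / rho_w + rho_u * du2o\<^sup>2 + rho_w * dw2o\<^sup>2
       = du3\<^sup>2 / rho_u + dw3\<^sup>2 / rho_w + rho_u * du2\<^sup>2 + rho_w * dw2\<^sup>2
         + 2 * (D1 * du1 - D2 * dw1) + rho_u * (du1 - du2o)\<^sup>2 + rho_w * (dw1 - dw2o)\<^sup>2
         + 2 * (G * du2)"
proof -
  have D1: "D1 = alpha * dw1 - du3o - rho_u * (du1 - du2o)" using step_i_u by linarith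
  have D2: "D2 = alpha * du1 + dw3o + rho_w * (dw1 - dw2o)" using step_i_w by linarith
  have G: "G = du3 + (1 - alpha) * dw2" using step_ii_u step_iii_u by linarith
  have du3o: "du3o = du3 - rho_u * (du1 - du2)" using step_iii_u by linarith
  have dw3o: "dw3o = dw3 - rho_w * (dw1 - dw2)" using step_iii_w by linarith
  have dw3: "dw3 = (1 - alpha) * du2" using step_ii_w step_iii_w by linarith
  show ?thesis
    unfolding D1 D2 G du3o dw3o dw3 using assms(1,2)
    by (simp add: field_simps power2_eq_square)
qed

lemma tendsto_zero_of_decrease:
  fixes V X :: "nat \<Rightarrow> real"
  assumes V_nonneg: "\<And>n. 0 \<le> V n" and X_nonneg: "\<And>n. 0 \<le> X n"
    and decrease: "\<And>n. V (Suc n) + X (Suc n) \<le> V n"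
  shows "X \<longlonglongrightarrow> 0"
proof -
  have "decseq V"
  proof (rule decseq_SucI)
    show "V (Suc n) \<le> V n" for n using X_nonneg[of "Suc n"] decrease[of n] by linarith
  qed
  then obtain l where l: "V \<longlonglongrightarrow> l"
    using V_nonneg by (auto intro: decseq_convergent)
  have gaps: "(\<lambda>n. V n - V (Suc n)) \<longlonglongrightarrow> 0"
    using tendsto_diff[OF l LIMSEQ_Suc[OF l]] by simp
  have "X (Suc n) \<le> V n - V (Suc n)" for n
    using decrease[of n] by linarith
  then have "(\<lambda>n. X (Suc n)) \<longlonglongrightarrow> 0"
    using X_nonneg by (intro real_tendsto_sandwich[OF _ _ tendsto_const gaps]) auto
  then show ?thesis by (rule LIMSEQ_imp_Suc)
qed

lemma gnorm2_eq_sqrt_box_sum: "gnorm2 h N v = sqrt (h\<^sup>2 * box_sum N (\<lambda>i j k. (v i j k)\<^sup>2))"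
  unfolding gnorm2_def ginner_def box_sum_def by (simp add: power2_eq_square)

locale admm_splitting =
  fixes eps theta0 tau alpha rho_u rho_w h :: real and N :: nat and un :: grid
  assumes tau_nonneg: "0 \<le> tau" and rho_u_pos: "0 < rho_u" and rho_w_pos: "0 < rho_w"
begin

(* One sweep (i)-(iii) of Algorithm 1 from the state (u2, w2, u3, w3), through the intermediate
   iterate (u1, w1); a fixed point is a state (us, ws, lu, lw) with step P us ws P. *)
fun step :: "grid \<times> grid \<times> grid \<times> grid \<Rightarrow> grid \<Rightarrow> grid \<Rightarrow> grid \<times> grid \<times> grid \<times> grid \<Rightarrow> bool"
  where "step (u2o, w2o, u3o, w3o) u1 w1 (u2, w2, u3, w3) \<longleftrightarrow>
    per N u1 \<and> per N w1 \<and> per N u2 \<and> per N w2 \<and>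
    (\<forall>i j k.
      - eps\<^sup>2 * lap h u1 i j k - alpha * w1 i j k + u3o i j k + rho_u * (u1 i j k - u2o i j k) = 0 \<and>
      alpha * (- u1 i j k + un i j k) + tau * lap h w1 i j k - w3o i j k
        - rho_w * (w1 i j k - w2o i j k) = 0 \<and>
      -1 < u2 i j k \<and> u2 i j k < 1 \<and>
      log_ratio (u2 i j k) - theta0 * un i j k - (1 - alpha) * w2 i j k - u3o i j k
        - rho_u * (u1 i j k - u2 i j k) = 0 \<and>
      (1 - alpha) * (- u2 i j k + un i j k) + w3o i j k + rho_w * (w1 i j k - w2 i j k) = 0 \<and>
      u3 i j k = u3o i j k + rho_u * (u1 i j k - u2 i j k) \<and>
      w3 i j k = w3o i j k + rho_w * (w1 i j k - w2 i j k))"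

fun energy_density :: "grid \<times> grid \<times> grid \<times> grid \<Rightarrow> grid \<times> grid \<times> grid \<times> grid \<Rightarrow> grid"
  where "energy_density (u2, w2, u3, w3) (us, ws, lu, lw) = (\<lambda>i j k.
    (u3 i j k - lu i j k)\<^sup>2 / rho_u + (w3 i j k - lw i j k)\<^sup>2 / rho_w
    + rho_u * (u2 i j k - us i j k)\<^sup>2 + rho_w * (w2 i j k - ws i j k)\<^sup>2)"

definition energy :: "grid \<times> grid \<times> grid \<times> grid \<Rightarrow> grid \<times> grid \<times> grid \<times> grid \<Rightarrow> real"
  where "energy S P = box_sum N (energy_density S P)"

lemma energy_nonneg: "0 \<le> energy S P"
  unfolding energy_def using rho_u_pos rho_w_pos
  by (cases S rule: prod_cases4, cases P rule: prod_cases4) (auto intro!: box_sum_nonneg)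

lemma energy_density_descent:
  assumes fixed_point: "step (us, ws, lu, lw) us ws (us, ws, lu, lw)"
    and iteration: "step (u2o, w2o, u3o, w3o) u1 w1 (u2, w2, u3, w3)"
  defines "du1 \<equiv> \<lambda>i j k. u1 i j k - us i j k" and "dw1 \<equiv> \<lambda>i j k. w1 i j k - ws i j k"
  shows "energy_density (u2, w2, u3, w3) (us, ws, lu, lw) i j k + 4 * (u2 i j k - us i j k)\<^sup>2
       \<le> energy_density (u2o, w2o, u3o, w3o) (us, ws, lu, lw) i j k
         + 2 * eps\<^sup>2 * (lap h du1 i j k * du1 i j k) + 2 * tau * (lap h dw1 i j k * dw1 i j k)"
proof -
  let ?G = "log_ratio (u2 i j k) - log_ratio (us i j k)"
  have fixed: "- eps\<^sup>2 * lap h us i j k - alpha * ws i j k + lu i j k = 0"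
      "alpha * (- us i j k + un i j k) + tau * lap h ws i j k - lw i j k = 0"
      "log_ratio (us i j k) - theta0 * un i j k - (1 - alpha) * ws i j k - lu i j k = 0"
      "(1 - alpha) * (- us i j k + un i j k) + lw i j k = 0"
      "-1 < us i j k" "us i j k < 1"
    using fixed_point by simp_all
  have iter: "- eps\<^sup>2 * lap h u1 i j k - alpha * w1 i j k + u3o i j k + rho_u * (u1 i j k - u2o i j k) = 0"
      "alpha * (- u1 i j k + un i j k) + tau * lap h w1 i j k - w3o i j k
        - rho_w * (w1 i j k - w2o i j k) = 0"
      "log_ratio (u2 i j k) - theta0 * un i j k - (1 - alpha) * w2 i j k - u3o i j k
        - rho_u * (u1 i j k - u2 i j k) = 0"
      "(1 - alpha) * (- u2 i j k + un i j k) + w3o i j k + rho_w * (w1 i j k - w2 i j k) = 0"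
      "u3 i j k = u3o i j k + rho_u * (u1 i j k - u2 i j k)"
      "w3 i j k = w3o i j k + rho_w * (w1 i j k - w2 i j k)"
      "-1 < u2 i j k" "u2 i j k < 1"
    using iteration by simp_all
  have identity:
    "energy_density (u2o, w2o, u3o, w3o) (us, ws, lu, lw) i j k
     = energy_density (u2, w2, u3, w3) (us, ws, lu, lw) i j k
       + 2 * ((- eps\<^sup>2 * lap h du1 i j k) * du1 i j k - (tau * lap h dw1 i j k) * dw1 i j k)
       + rho_u * (du1 i j k - (u2o i j k - us i j k))\<^sup>2
       + rho_w * (dw1 i j k - (w2o i j k - ws i j k))\<^sup>2
       + 2 * (?G * (u2 i j k - us i j k))"
    using rho_u_pos rho_w_pos fixed(1-4) iter(1-6) unfolding energy_density.simps
    by (intro admm_error_identity[where alpha = alpha])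
      (simp_all add: du1_def dw1_def lap_diff algebra_simps)
  have "2 * (u2 i j k - us i j k)\<^sup>2 \<le> ?G * (u2 i j k - us i j k)"
    using fixed(5,6) iter(7,8) by (intro log_ratio_strongly_monotone)
  moreover have "0 \<le> rho_u * (du1 i j k - (u2o i j k - us i j k))\<^sup>2"
      "0 \<le> rho_w * (dw1 i j k - (w2o i j k - ws i j k))\<^sup>2"
    using rho_u_pos rho_w_pos by simp_all
  moreover have "2 * ((- eps\<^sup>2 * lap h du1 i j k) * du1 i j k - (tau * lap h dw1 i j k) * dw1 i j k)
      = - (2 * eps\<^sup>2 * (lap h du1 i j k * du1 i j k)) - 2 * tau * (lap h dw1 i j k * dw1 i j k)"
    by (simp add: algebra_simps)
  ultimately show ?thesis
    using identity by linarith
qed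

lemma energy_descent:
  assumes fixed_point: "step (us, ws, lu, lw) us ws (us, ws, lu, lw)"
    and iteration: "step (u2o, w2o, u3o, w3o) u1 w1 (u2, w2, u3, w3)"
  shows "energy (u2, w2, u3, w3) (us, ws, lu, lw) + 4 * box_sum N (\<lambda>i j k. (u2 i j k - us i j k)\<^sup>2)
       \<le> energy (u2o, w2o, u3o, w3o) (us, ws, lu, lw)"
proof -
  define du1 where "du1 = (\<lambda>i j k. u1 i j k - us i j k)"
  define dw1 where "dw1 = (\<lambda>i j k. w1 i j k - ws i j k)"
  have "energy (u2, w2, u3, w3) (us, ws, lu, lw) + 4 * box_sum N (\<lambda>i j k. (u2 i j k - us i j k)\<^sup>2)
      \<le> energy (u2o, w2o, u3o, w3o) (us, ws, lu, lw)
        + 2 * eps\<^sup>2 * box_sum N (\<lambda>i j k. lap h du1 i j k * du1 i j k)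
        + 2 * tau * box_sum N (\<lambda>i j k. lap h dw1 i j k * dw1 i j k)"
    using box_sum_mono[OF energy_density_descent[OF assms], of N]
    unfolding energy_def du1_def dw1_def by (simp add: box_sum_add box_sum_cmult)
  moreover have "per N du1" "per N dw1"
    using assms by (simp_all add: du1_def dw1_def per_diff)
  then have "2 * eps\<^sup>2 * box_sum N (\<lambda>i j k. lap h du1 i j k * du1 i j k) \<le> 0"
      "2 * tau * box_sum N (\<lambda>i j k. lap h dw1 i j k * dw1 i j k) \<le> 0"
    using box_sum_lap_mult_self_nonpos tau_nonneg by (simp_all add: mult_nonneg_nonpos)
  ultimately show ?thesis by linarith
qed

end

theorem theorem4p4:
  fixes L eps theta0 tau alpha rho_u rho_w h :: real
    and N :: nat
    and un unp1 wnp1 :: grid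
    and u1 w1 u2 w2 u3 w3 :: "nat \<Rightarrow> grid"
  assumes "L > 0" and "N > 0" and "h = L / real N"
    and "eps > 0" and "theta0 > 0" and "tau > 0"
    and "0 < alpha" and "alpha < 1" and "rho_u > 0" and "rho_w > 0"
    and "per N un" and "\<forall>i j k. -1 < un i j k \<and> un i j k < 1"
    (* the convex splitting scheme solution *)
    and "per N unp1" and "per N wnp1"
    and "\<forall>i j k. -1 < unp1 i j k \<and> unp1 i j k < 1"
    and "\<forall>i j k. unp1 i j k - un i j k = tau * lap h wnp1 i j k"
    and "\<forall>i j k. wnp1 i j k = ln (1 + unp1 i j k) - ln (1 - unp1 i j k)
                 - theta0 * un i j k - eps\<^sup>2 * lap h unp1 i j k"
    (* Algorithm 1: initialisation *)
    and "u2 0 = un" and "w2 0 = (\<lambda>i j k. 0)"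
    and "u3 0 = (\<lambda>i j k. 0)" and "w3 0 = (\<lambda>i j k. 0)"
    (* Algorithm 1, step (i) *)
    and "\<forall>m. per N (u1 (Suc m)) \<and> per N (w1 (Suc m))"
    and "\<forall>m i j k. - eps\<^sup>2 * lap h (u1 (Suc m)) i j k - alpha * w1 (Suc m) i j k
                 + u3 m i j k + rho_u * (u1 (Suc m) i j k - u2 m i j k) = 0"
    and "\<forall>m i j k. alpha * (- u1 (Suc m) i j k + un i j k) + tau * lap h (w1 (Suc m)) i j k
                 - w3 m i j k - rho_w * (w1 (Suc m) i j k - w2 m i j k) = 0"
    (* Algorithm 1, step (ii) *)
    and "\<forall>m. per N (u2 (Suc m)) \<and> per N (w2 (Suc m))"
    and "\<forall>m i j k. -1 < u2 (Suc m) i j k \<and> u2 (Suc m) i j k < 1"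
    and "\<forall>m i j k. ln (1 + u2 (Suc m) i j k) - ln (1 - u2 (Suc m) i j k)
                 - theta0 * un i j k - (1 - alpha) * w2 (Suc m) i j k - u3 m i j k
                 - rho_u * (u1 (Suc m) i j k - u2 (Suc m) i j k) = 0"
    and "\<forall>m i j k. (1 - alpha) * (- u2 (Suc m) i j k + un i j k) + w3 m i j k
                 + rho_w * (w1 (Suc m) i j k - w2 (Suc m) i j k) = 0"
    (* Algorithm 1, step (iii) *)
    and "\<forall>m i j k. u3 (Suc m) i j k = u3 m i j k + rho_u * (u1 (Suc m) i j k - u2 (Suc m) i j k)"
    and "\<forall>m i j k. w3 (Suc m) i j k = w3 m i j k + rho_w * (w1 (Suc m) i j k - w2 (Suc m) i j k)"
  shows "(\<lambda>m. gnorm2 h N (\<lambda>i j k. u2 m i j k - unp1 i j k)) \<longlonglongrightarrow> 0"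
proof -
  interpret admm: admm_splitting eps theta0 tau alpha rho_u rho_w h N un
    using assms by unfold_locales auto
  define lu where "lu = (\<lambda>i j k. log_ratio (unp1 i j k) - theta0 * un i j k - (1 - alpha) * wnp1 i j k)"
  define lw where "lw = (\<lambda>i j k. (1 - alpha) * (unp1 i j k - un i j k))"
  define P where "P = (unp1, wnp1, lu, lw)"
  define S where "S m = (u2 m, w2 m, u3 m, w3 m)" for m
  define X where "X m = box_sum N (\<lambda>i j k. (u2 m i j k - unp1 i j k)\<^sup>2)" for m
  have "admm.step P unp1 wnp1 P"
    using assms(13-17) by (auto simp: P_def lu_def lw_def log_ratio_def algebra_simps)
  moreover have "admm.step (S m) (u1 (Suc m)) (w1 (Suc m)) (S (Suc m))" for m
    using assms(22-30) by (simp add: S_def log_ratio_def)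
  ultimately have "admm.energy (S (Suc m)) P + 4 * X (Suc m) \<le> admm.energy (S m) P" for m
    unfolding P_def S_def X_def by (rule admm.energy_descent)
  then have "(\<lambda>m. 4 * X m) \<longlonglongrightarrow> 0"
    by (intro tendsto_zero_of_decrease[where V = "\<lambda>m. admm.energy (S m) P"])
      (simp_all add: admm.energy_nonneg X_def box_sum_nonneg)
  then have "(\<lambda>m. sqrt (h\<^sup>2 * X m)) \<longlonglongrightarrow> sqrt (h\<^sup>2 * 0)"
    by (intro tendsto_intros) (simp add: tendsto_mult_left_iff)
  then show ?thesis
    by (simp add: gnorm2_eq_sqrt_box_sum X_def)
qed

end
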